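(* Let $G$ be a star with one central vertex $\mathsf{v}_1$ and $N\ge2$ semi-infinite edges, of which $\mathsf{e}_1,\dots,\mathsf{e}_L$ ($1\le L<N$) are incoming and identified with $(-\infty,0]$ and $\mathsf{e}_{L+1},\dots,\mathsf{e}_N$ are outgoing and identified with $[0,\infty)$, the central vertex corresponding to $0$ on every edge. Consider on $G$ the system $$\partial_tu_i-a_i\partial_x^2\partial_tu_i+b_iu_i\partial_xu_i=0\ \text{ on }\mathsf{e}_i,\ t>0,\qquad u_j(t,0)=u_k(t,0)\ \ (1\le j,k\le N,\ t\ge0),$$ $$\sum_{i=1}^L a_i\partial_xu_i(t,0)-\sum_{i=L+1}^N a_i\partial_xu_i(t,0)=0\quad (t\ge0),$$ i.e. (BBMG) with all $d_i=0$, where $a_i>0$ and $b_i\in\mathbb{R}\setminus\{0\}$. Assume $$\sqrt{\frac{a_i}{a_1}}=\frac{b_i}{b_1}>0\quad\text{for all }1\le i\le N,\qquad\text{and}\qquad \sum_{i=1}^Lb_i=\sum_{j=L+1}^Nb_j.$$ Then for every $c_1>0$, setting $c_i=\sqrt{a_i/a_1}\,c_1$ for $1\le i\le N$, there exist real constants $\tau_i$ such that the function $u$ given on each edge by $u_i(t,x)=\varphi_i(x-c_it+\tau_i)$, where $$\varphi_i(z)=\frac{6c_i}{b_i}\cdot\frac{1}{1+\cosh\big(z/\sqrt{a_i}\big)},\qquad z\in\mathbb{R},$$ is a strong solution of this system.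
   Context: A strong solution is a function $u$ which is continuous on the star for each $t$, with $u_i\in\mathcal{C}^{1,1}(\mathsf{e}_i\times[0,\infty))$ and $\partial_tu_i\in\mathcal{C}^{2,0}(\mathsf{e}_i\times[0,\infty))$ on each edge, and which satisfies the system pointwise. The profile $\varphi_i$ is the solitary wave $\frac{6(c-d)}{b}\big(1+\cosh(\sqrt{(c-d)/(ac)}\,z)\big)^{-1}$ with $a=a_i$, $b=b_i$, $c=c_i$, $d=0$. No conditions are imposed at infinity and no initial condition is imposed. *)

theory Defs
  imports "HOL-Analysis.Analysis"
begin

text \<open>The central vertex is x = 0.
  A function on the star is a family u i t x (edge index i, time t, position x).\<close>

definition edge :: "nat \<Rightarrow> nat \<Rightarrow> real set" where
  "edge L i = (if i \<le> L then {..0} else {0..})"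

definition strong_solution_BBMG ::
  "nat \<Rightarrow> nat \<Rightarrow> (nat \<Rightarrow> real) \<Rightarrow> (nat \<Rightarrow> real) \<Rightarrow> (nat \<Rightarrow> real \<Rightarrow> real \<Rightarrow> real) \<Rightarrow> bool" where
  "strong_solution_BBMG N L a b u \<longleftrightarrow>
    (\<exists>ut ux utx utxx :: nat \<Rightarrow> real \<Rightarrow> real \<Rightarrow> real.
      (\<forall>i\<in>{1..N}.
         (\<forall>t\<ge>0. \<forall>x\<in>edge L i.
            ((\<lambda>s. u i s x) has_real_derivative ut i t x) (at t within {0..}) \<and>
            ((\<lambda>y. u i t y) has_real_derivative ux i t x) (at x within edge L i) \<and>
            ((\<lambda>y. ut i t y) has_real_derivative utx i t x) (at x within edge L i) \<and>
            ((\<lambda>y. utx i t y) has_real_derivative utxx i t x) (at x within edge L i)) \<and>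
         continuous_on ({0..} \<times> edge L i) (\<lambda>(t,x). u i t x) \<and>
         continuous_on ({0..} \<times> edge L i) (\<lambda>(t,x). ut i t x) \<and>
         continuous_on ({0..} \<times> edge L i) (\<lambda>(t,x). ux i t x) \<and>
         continuous_on ({0..} \<times> edge L i) (\<lambda>(t,x). utx i t x) \<and>
         continuous_on ({0..} \<times> edge L i) (\<lambda>(t,x). utxx i t x) \<and>
         (\<forall>t>0. \<forall>x\<in>edge L i.
            ut i t x - a i * utxx i t x + b i * u i t x * ux i t x = 0)) \<and>
      (\<forall>t\<ge>0. \<forall>j\<in>{1..N}. \<forall>k\<in>{1..N}. u j t 0 = u k t 0) \<and>
      (\<forall>t\<ge>0. (\<Sum>i=1..L. a i * ux i t 0) - (\<Sum>i=L+1..N. a i * ux i t 0) = 0))"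

definition phi :: "real \<Rightarrow> real \<Rightarrow> real \<Rightarrow> real \<Rightarrow> real" where
  "phi a b c z = (6 * c / b) * (1 / (1 + cosh (z / sqrt a)))"

end

theory Submission
  imports Defs
begin

text \<open>The profile is \<open>\<phi>(z) = (6c/b) w(z/\<surd>a)\<close> with \<open>w y = 1 / (1 + cosh y)\<close>, and \<open>w\<close>
  satisfies \<open>w''' - w' + 6 w w' = 0\<close>, which is exactly what makes \<open>\<phi>(x - c t + \<tau>)\<close> solve the
  BBM equation on each edge, for any shift \<open>\<tau>\<close>. The profile is invariant under
  \<open>(a, b, c, z) \<mapsto> (r\<^sup>2 a, r b, r c, r z)\<close>, and under the hypotheses the data of edge \<open>i\<close>
  arise from those of edge 1 by this scaling with \<open>r = b\<^sub>i / b\<^sub>1\<close>. Taking all \<open>\<tau>\<^sub>i = 0\<close>, the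
  waves therefore agree at the vertex, and \<open>a\<^sub>i \<partial>\<^sub>xu\<^sub>i(t,0)\<close> is \<open>b\<^sub>i\<close> times a factor common to
  all edges, so the Kirchhoff condition reduces to the balance of the \<open>b\<^sub>i\<close>.\<close>

lemma one_plus_cosh_nonzero [simp]: "1 + cosh (x::real) \<noteq> 0"
  using cosh_real_ge_1[of x] by linarith

definition wave :: "real \<Rightarrow> real" where "wave y = 1 / (1 + cosh y)"
definition wave_d1 :: "real \<Rightarrow> real" where "wave_d1 y = - sinh y / (1 + cosh y)^2"
definition wave_d2 :: "real \<Rightarrow> real" where "wave_d2 y = (cosh y - 2) / (1 + cosh y)^2"
definition wave_d3 :: "real \<Rightarrow> real" where
  "wave_d3 y = sinh y * (5 - cosh y) / (1 + cosh y)^3"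

lemma wave_has_derivative: "(wave has_real_derivative wave_d1 y) (at y)"
  unfolding wave_def wave_d1_def
  by (rule derivative_eq_intros refl)+ (simp_all add: field_simps power2_eq_square)

lemma wave_d1_has_derivative: "(wave_d1 has_real_derivative wave_d2 y) (at y)"
  unfolding wave_d1_def wave_d2_def
  apply (rule derivative_eq_intros refl)+
  apply (simp_all add: divide_simps)
  using sinh_square_eq[of y] by algebra

lemma wave_d2_has_derivative: "(wave_d2 has_real_derivative wave_d3 y) (at y)"
  unfolding wave_d2_def wave_d3_def
  apply (rule derivative_eq_intros refl)+
  apply (simp_all add: divide_simps)
  by (simp add: algebra_simps eval_nat_numeral)

lemma wave_ode: "wave_d3 y - wave_d1 y + 6 * wave y * wave_d1 y = 0"
  unfolding wave_def wave_d1_def wave_d3_def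
  by (simp add: divide_simps, simp add: algebra_simps eval_nat_numeral)

definition phi_d1 :: "real \<Rightarrow> real \<Rightarrow> real \<Rightarrow> real \<Rightarrow> real" where
  "phi_d1 a b c z = 6 * c / b / sqrt a * wave_d1 (z / sqrt a)"
definition phi_d2 :: "real \<Rightarrow> real \<Rightarrow> real \<Rightarrow> real \<Rightarrow> real" where
  "phi_d2 a b c z = 6 * c / b / sqrt a / sqrt a * wave_d2 (z / sqrt a)"
definition phi_d3 :: "real \<Rightarrow> real \<Rightarrow> real \<Rightarrow> real \<Rightarrow> real" where
  "phi_d3 a b c z = 6 * c / b / sqrt a / sqrt a / sqrt a * wave_d3 (z / sqrt a)"

lemma phi_eq_wave: "phi a b c z = 6 * c / b * wave (z / sqrt a)"
  by (simp add: phi_def wave_def)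

lemma DERIV_scaled_profile:
  assumes "\<And>y. (g has_real_derivative g' y) (at y)"
  shows "((\<lambda>z. K * g (z / q)) has_real_derivative K / q * g' (z / q)) (at z)"
proof -
  have "((\<lambda>z. z / q) has_real_derivative 1 / q) (at z)"
    by (rule DERIV_cdivide[OF DERIV_ident])
  from DERIV_cmult[OF DERIV_chain2[OF assms this], of K] show ?thesis
    by simp
qed

lemma phi_has_derivative: "(phi a b c has_real_derivative phi_d1 a b c z) (at z)"
  using DERIV_scaled_profile[OF wave_has_derivative, of "6 * c / b" "sqrt a" z]
  unfolding phi_eq_wave[abs_def] phi_d1_def .

lemma phi_d1_has_derivative: "(phi_d1 a b c has_real_derivative phi_d2 a b c z) (at z)"
  using DERIV_scaled_profile[OF wave_d1_has_derivative, of "6 * c / b / sqrt a" "sqrt a" z]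
  unfolding phi_d1_def[abs_def] phi_d2_def .

lemma phi_d2_has_derivative: "(phi_d2 a b c has_real_derivative phi_d3 a b c z) (at z)"
  using DERIV_scaled_profile[OF wave_d2_has_derivative, of "6 * c / b / sqrt a / sqrt a" "sqrt a" z]
  unfolding phi_d2_def[abs_def] phi_d3_def .

lemma isCont_phi_d3: "isCont (phi_d3 a b c) z"
proof -
  have "isCont (\<lambda>z. z / sqrt a) z"
    by (rule DERIV_isCont[OF DERIV_cdivide[OF DERIV_ident]])
  moreover have "isCont wave_d3 (z / sqrt a)"
    unfolding wave_d3_def by (intro continuous_intros) simp
  ultimately have "isCont (\<lambda>z. wave_d3 (z / sqrt a)) z"
    by (rule isCont_o2)
  then show ?thesis
    unfolding phi_d3_def by (intro continuous_intros)
qed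

text \<open>For \<open>u = \<phi>(x - c t + \<tau>)\<close> one has \<open>\<partial>\<^sub>tu = -c \<phi>'\<close> and \<open>\<partial>\<^sub>x\<^sup>2\<partial>\<^sub>tu = -c \<phi>'''\<close>,
  so this is the BBM equation along the wave.\<close>

lemma phi_travelling_wave_ode:
  assumes "a > 0" and "b \<noteq> 0"
  shows "- c * phi_d1 a b c z - a * (- c * phi_d3 a b c z)
           + b * phi a b c z * phi_d1 a b c z = 0"
proof -
  define y where "y = z / sqrt a"
  have q: "sqrt a \<noteq> 0" "sqrt a * sqrt a = a"
    using assms(1) by auto
  have "wave_d3 y = wave_d1 y - 6 * wave y * wave_d1 y"
    using wave_ode[of y] by linarith
  then show ?thesis
    using assms(2) q
    by (simp add: phi_eq_wave phi_d1_def phi_d3_def flip: y_def)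
       (simp add: field_simps)
qed

lemma DERIV_travelling_time:
  assumes "\<And>z. (g has_real_derivative g' z) (at z)"
  shows "((\<lambda>s. g (x - c * s + \<tau>)) has_real_derivative - c * g' (x - c * t + \<tau>)) (at t within T)"
proof -
  have "((\<lambda>s. x - c * s + \<tau>) has_real_derivative - c) (at t)"
    by (auto intro!: derivative_eq_intros)
  from DERIV_chain2[OF assms this]
  have "((\<lambda>s. g (x - c * s + \<tau>)) has_real_derivative - c * g' (x - c * t + \<tau>)) (at t)"
    by (simp add: mult.commute)
  then show ?thesis
    by (rule has_field_derivative_at_within)
qed

lemma DERIV_travelling_space:
  assumes "\<And>z. (g has_real_derivative g' z) (at z)"
  shows "((\<lambda>y. g (y - c * t + \<tau>)) has_real_derivative g' (x - c * t + \<tau>)) (at x within S)"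
proof -
  have "((\<lambda>y. y - c * t + \<tau>) has_real_derivative 1) (at x)"
    by (auto intro!: derivative_eq_intros)
  from DERIV_chain2[OF assms this] show ?thesis
    by (simp add: has_field_derivative_at_within)
qed

lemma continuous_on_travelling:
  fixes g :: "real \<Rightarrow> real"
  assumes "\<And>z. isCont g z"
  shows "continuous_on S (\<lambda>(t, x). g (x - c * t + \<tau>))"
proof -
  have "continuous_on UNIV g"
    by (simp add: assms continuous_at_imp_continuous_on)
  then have "continuous_on S (\<lambda>p. g (snd p - c * fst p + \<tau>))"
    by (rule continuous_on_compose2[OF _ _ subset_UNIV]) (intro continuous_intros)
  then show ?thesis
    by (simp add: case_prod_unfold)
qed

lemma strong_solution_BBMG_travelling_phi:
  assumes coeffs: "\<And>i. i \<in> {1..N} \<Longrightarrow> a i > 0 \<and> b i \<noteq> 0"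
    and vertex_continuity: "\<And>t j k. t \<ge> 0 \<Longrightarrow> j \<in> {1..N} \<Longrightarrow> k \<in> {1..N} \<Longrightarrow>
      phi (a j) (b j) (c j) (\<tau> j - c j * t) = phi (a k) (b k) (c k) (\<tau> k - c k * t)"
    and kirchhoff: "\<And>t. t \<ge> 0 \<Longrightarrow>
      (\<Sum>i=1..L. a i * phi_d1 (a i) (b i) (c i) (\<tau> i - c i * t))
        = (\<Sum>i=L+1..N. a i * phi_d1 (a i) (b i) (c i) (\<tau> i - c i * t))"
  shows "strong_solution_BBMG N L a b (\<lambda>i t x. phi (a i) (b i) (c i) (x - c i * t + \<tau> i))"
  unfolding strong_solution_BBMG_def
proof (rule exI[of _ "\<lambda>i t x. - c i * phi_d1 (a i) (b i) (c i) (x - c i * t + \<tau> i)"],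
    rule exI[of _ "\<lambda>i t x. phi_d1 (a i) (b i) (c i) (x - c i * t + \<tau> i)"],
    rule exI[of _ "\<lambda>i t x. - c i * phi_d2 (a i) (b i) (c i) (x - c i * t + \<tau> i)"],
    rule exI[of _ "\<lambda>i t x. - c i * phi_d3 (a i) (b i) (c i) (x - c i * t + \<tau> i)"],
    intro conjI ballI allI impI)
  fix i t x
  show "((\<lambda>s. phi (a i) (b i) (c i) (x - c i * s + \<tau> i)) has_real_derivative
      - c i * phi_d1 (a i) (b i) (c i) (x - c i * t + \<tau> i)) (at t within {0..})"
    by (rule DERIV_travelling_time[OF phi_has_derivative])
  show "((\<lambda>y. phi (a i) (b i) (c i) (y - c i * t + \<tau> i)) has_real_derivative
      phi_d1 (a i) (b i) (c i) (x - c i * t + \<tau> i)) (at x within edge L i)"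
    by (rule DERIV_travelling_space[OF phi_has_derivative])
  show "((\<lambda>y. - c i * phi_d1 (a i) (b i) (c i) (y - c i * t + \<tau> i)) has_real_derivative
      - c i * phi_d2 (a i) (b i) (c i) (x - c i * t + \<tau> i)) (at x within edge L i)"
    by (rule DERIV_cmult[OF DERIV_travelling_space[OF phi_d1_has_derivative]])
  show "((\<lambda>y. - c i * phi_d2 (a i) (b i) (c i) (y - c i * t + \<tau> i)) has_real_derivative
      - c i * phi_d3 (a i) (b i) (c i) (x - c i * t + \<tau> i)) (at x within edge L i)"
    by (rule DERIV_cmult[OF DERIV_travelling_space[OF phi_d2_has_derivative]])
next
  fix i assume "i \<in> {1..N}"
  then show "- c i * phi_d1 (a i) (b i) (c i) (x - c i * t + \<tau> i)
      - a i * (- c i * phi_d3 (a i) (b i) (c i) (x - c i * t + \<tau> i))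
      + b i * phi (a i) (b i) (c i) (x - c i * t + \<tau> i)
          * phi_d1 (a i) (b i) (c i) (x - c i * t + \<tau> i) = 0" for t x
    using coeffs by (intro phi_travelling_wave_ode) auto
next
  fix i
  have cont: "isCont (phi (a i) (b i) (c i)) z" "isCont (phi_d1 (a i) (b i) (c i)) z"
    "isCont (phi_d2 (a i) (b i) (c i)) z" "isCont (phi_d3 (a i) (b i) (c i)) z" for z
    using phi_has_derivative phi_d1_has_derivative phi_d2_has_derivative isCont_phi_d3
    by (blast intro: DERIV_isCont)+
  show "continuous_on ({0..} \<times> edge L i) (\<lambda>(t, x). phi (a i) (b i) (c i) (x - c i * t + \<tau> i))"
    "continuous_on ({0..} \<times> edge L i)
       (\<lambda>(t, x). - c i * phi_d1 (a i) (b i) (c i) (x - c i * t + \<tau> i))"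
    "continuous_on ({0..} \<times> edge L i) (\<lambda>(t, x). phi_d1 (a i) (b i) (c i) (x - c i * t + \<tau> i))"
    "continuous_on ({0..} \<times> edge L i)
       (\<lambda>(t, x). - c i * phi_d2 (a i) (b i) (c i) (x - c i * t + \<tau> i))"
    "continuous_on ({0..} \<times> edge L i)
       (\<lambda>(t, x). - c i * phi_d3 (a i) (b i) (c i) (x - c i * t + \<tau> i))"
    by (intro continuous_on_travelling continuous_intros cont)+
next
  show "phi (a j) (b j) (c j) (0 - c j * t + \<tau> j) = phi (a k) (b k) (c k) (0 - c k * t + \<tau> k)"
    if "t \<ge> 0" "j \<in> {1..N}" "k \<in> {1..N}" for t j k
    using vertex_continuity[OF that] by simp
  show "(\<Sum>i=1..L. a i * phi_d1 (a i) (b i) (c i) (0 - c i * t + \<tau> i))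
      - (\<Sum>i=L+1..N. a i * phi_d1 (a i) (b i) (c i) (0 - c i * t + \<tau> i)) = 0"
    if "t \<ge> 0" for t
    using kirchhoff[OF that] by simp
qed

lemma phi_scale:
  assumes "r > 0"
  shows "phi (r\<^sup>2 * a) (r * b) (r * c) (r * z) = phi a b c z"
  using assms by (simp add: phi_def real_sqrt_mult)

lemma phi_d1_scale:
  assumes "r > 0"
  shows "r\<^sup>2 * a * phi_d1 (r\<^sup>2 * a) (r * b) (r * c) (r * z) = r * (a * phi_d1 a b c z)"
  using assms by (simp add: phi_d1_def real_sqrt_mult power2_eq_square)

lemma phi_matched_edge_at_vertex:
  fixes a b a1 b1 c1 t :: real
  assumes "a > 0" and "a1 > 0" and "b1 \<noteq> 0"
    and ratio: "sqrt (a / a1) = b / b1" and ratio_pos: "b / b1 > 0"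
  defines "c \<equiv> sqrt (a / a1) * c1"
  shows "phi a b c (0 - c * t) = phi a1 b1 c1 (- c1 * t)"
    and "a * phi_d1 a b c (0 - c * t) = b * (a1 / b1 * phi_d1 a1 b1 c1 (- c1 * t))"
proof -
  define r where "r = b / b1"
  have "r > 0"
    using ratio_pos by (simp add: r_def)
  have "a / a1 = (sqrt (a / a1))\<^sup>2"
    using assms(1,2) by simp
  then have a_eq: "a = r\<^sup>2 * a1"
    using assms(2) by (simp add: ratio r_def field_simps)
  have b_eq: "b = r * b1" and c_eq: "c = r * c1" and z_eq: "0 - c * t = r * (- c1 * t)"
    using assms(3) by (simp_all add: c_def ratio r_def)
  show "phi a b c (0 - c * t) = phi a1 b1 c1 (- c1 * t)"
    unfolding z_eq unfolding c_eq a_eq b_eq by (rule phi_scale[OF \<open>r > 0\<close>])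
  show "a * phi_d1 a b c (0 - c * t) = b * (a1 / b1 * phi_d1 a1 b1 c1 (- c1 * t))"
    unfolding z_eq unfolding c_eq a_eq b_eq phi_d1_scale[OF \<open>r > 0\<close>] using assms(3) by simp
qed

theorem theorem5p1:
  fixes N L :: nat and a b :: "nat \<Rightarrow> real" and c1 :: real
  assumes "2 \<le> N" and "1 \<le> L" and "L < N"
    and "\<forall>i\<in>{1..N}. a i > 0"
    and "\<forall>i\<in>{1..N}. b i \<noteq> 0"
    and "\<forall>i\<in>{1..N}. sqrt (a i / a 1) = b i / b 1 \<and> b i / b 1 > 0"
    and "(\<Sum>i=1..L. b i) = (\<Sum>j=L+1..N. b j)"
    and "c1 > 0"
  shows "\<exists>\<tau> :: nat \<Rightarrow> real. strong_solution_BBMG N L a b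
           (\<lambda>i t x. phi (a i) (b i) (sqrt (a i / a 1) * c1)
                       (x - sqrt (a i / a 1) * c1 * t + \<tau> i))"
proof -
  have a1: "a 1 > 0" "b 1 \<noteq> 0"
    using assms(1,4,5) by auto
  define M where "M t = a 1 / b 1 * phi_d1 (a 1) (b 1) c1 (- c1 * t)" for t
  have vertex_value: "phi (a i) (b i) (sqrt (a i / a 1) * c1) (0 - sqrt (a i / a 1) * c1 * t)
        = phi (a 1) (b 1) c1 (- c1 * t)"
    and vertex_flux: "a i * phi_d1 (a i) (b i) (sqrt (a i / a 1) * c1) (0 - sqrt (a i / a 1) * c1 * t)
        = b i * M t"
    if "i \<in> {1..N}" for i t
    using phi_matched_edge_at_vertex[OF _ a1, of "a i" "b i" c1 t] assms(4,6) that
    by (auto simp: M_def)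
  have flux_sum: "(\<Sum>i\<in>I. a i * phi_d1 (a i) (b i) (sqrt (a i / a 1) * c1)
        (0 - sqrt (a i / a 1) * c1 * t)) = (\<Sum>i\<in>I. b i) * M t"
    if "I \<subseteq> {1..N}" for I t
    unfolding sum_distrib_right using that by (intro sum.cong refl vertex_flux) auto
  show ?thesis
  proof (intro exI[of _ "\<lambda>_. 0"] strong_solution_BBMG_travelling_phi)
    show "a i > 0 \<and> b i \<noteq> 0" if "i \<in> {1..N}" for i
      using assms(4,5) that by blast
  qed (use vertex_value flux_sum[of "{1..L}"] flux_sum[of "{L+1..N}"] assms(3,7) in simp_all)
qed

end
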